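(* Let $x_0\in X$ and for $r\ge0$ let $P_r$ be the orthogonal projection of $\ell^2(X)$ onto $\ell^2(Q_r(x_0))=\{\psi\in\ell^2(X):\psi(x)=0\text{ for }x\notin Q_r(x_0)\}$. Let $e^{(r)}_1\le\dots\le e^{(r)}_{N_r}$ be the eigenvalues (with multiplicity) of $P_r\Delta P_r$ acting on the $N_r$-dimensional space $\ell^2(Q_r(x_0))$, and $\nu_r=\frac1{N_r}\sum_{s=1}^{N_r}\delta(e^{(r)}_s)$. Then $\nu_r$ converges weak-* as $r\to\infty$ to the measure $\mu=\sum_{r=0}^\infty(\frac1{N_r}-\frac1{N_{r+1}})\delta(\lambda_r)$.
   Context: $X$ is an infinite countable set, $\delta_x$ is the Kronecker delta at $x\in X$. $\mathbf n=(n_r)_{r\ge0}$ is a sequence of positive integers and $\mathbf P=(\mathcal P_r)_{r\ge0}$ a sequence of partitions of $X$ (elements of $\mathcal P_r$ are "clusters of rank $r$"). $(X,\mathbf P,\mathbf n)$ is a hierarchical structure if: (i) $n_0=1$ and every cluster in $\mathcal P_0$ is a singleton; (ii) for $r\ge1$ every cluster in $\mathcal P_r$ is a disjoint union of exactly $n_r$ clusters of $\mathcal P_{r-1}$; (iii) any two points $x,y\in X$ lie in a common cluster of some rank. Set $N_r=\prod_{s=0}^r n_s$, let $Q_r(x)$ be the unique rank-$r$ cluster containing $x$, and $d(x,y)=\min\{r: y\in Q_r(x)\}$. The averaging operators $E_r$ on $\ell^2(X)$ are $(E_r\psi)(x)=\frac1{N_r}\sum_{d(x,y)\le r}\psi(y)$.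 Let $(p_r)_{r\ge1}$ be positive numbers with $\sum_{r\ge1}p_r=1$, set $p_0=0$, $\lambda_r=\sum_{s=0}^r p_s$, and $\Delta=\sum_{r=0}^\infty p_rE_r$. $\delta(\lambda)$ denotes the Dirac mass at $\lambda$. *)

theory Defs
  imports "HOL-Analysis.Analysis" "HOL-Probability.Probability_Mass_Function"
    "HOL-Library.Disjoint_Sets" "Jordan_Normal_Form.Char_Poly"
begin

definition hierarchical :: "(nat \<Rightarrow> 'a set set) \<Rightarrow> (nat \<Rightarrow> nat) \<Rightarrow> bool" where
  "hierarchical P n \<longleftrightarrow>
     (\<forall>r. n r > 0) \<and>
     (\<forall>r. partition_on (UNIV :: 'a set) (P r)) \<and>
     n 0 = 1 \<and> (\<forall>C\<in>P 0. \<exists>x. C = {x}) \<and>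
     (\<forall>r\<ge>1. \<forall>C\<in>P r. \<exists>S. S \<subseteq> P (r - 1) \<and> finite S \<and> card S = n r \<and> C = \<Union>S) \<and>
     (\<forall>x y. \<exists>r. \<exists>C\<in>P r. x \<in> C \<and> y \<in> C)"

definition NN :: "(nat \<Rightarrow> nat) \<Rightarrow> nat \<Rightarrow> nat" where
  "NN n r = (\<Prod>s\<le>r. n s)"

definition cluster :: "(nat \<Rightarrow> 'a set set) \<Rightarrow> nat \<Rightarrow> 'a \<Rightarrow> 'a set" where
  "cluster P r x = (THE C. C \<in> P r \<and> x \<in> C)"

definition hdist :: "(nat \<Rightarrow> 'a set set) \<Rightarrow> 'a \<Rightarrow> 'a \<Rightarrow> nat" where
  "hdist P x y = (LEAST r. y \<in> cluster P r x)"

text \<open>Matrix kernel of the averaging operator E_r in the standard basis: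
  (E_r \<psi>)(x) = \<Sum>_y E_kernel r x y * \<psi>(y).\<close>
definition E_kernel :: "(nat \<Rightarrow> 'a set set) \<Rightarrow> (nat \<Rightarrow> nat) \<Rightarrow> nat \<Rightarrow> 'a \<Rightarrow> 'a \<Rightarrow> real" where
  "E_kernel P n r x y = (if hdist P x y \<le> r then 1 / real (NN n r) else 0)"

text \<open>p_0 = 0 by convention; p is used only for r \<ge> 1.\<close>
definition pp :: "(nat \<Rightarrow> real) \<Rightarrow> nat \<Rightarrow> real" where
  "pp p r = (if r = 0 then 0 else p r)"

text \<open>Matrix kernel of \<Delta> = \<Sum>_r p_r E_r, i.e. <\<delta>_x, \<Delta> \<delta>_y>.\<close>
definition Delta_kernel :: "(nat \<Rightarrow> 'a set set) \<Rightarrow> (nat \<Rightarrow> nat) \<Rightarrow> (nat \<Rightarrow> real) \<Rightarrow> 'a \<Rightarrow> 'a \<Rightarrow> real" where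
  "Delta_kernel P n p x y = (\<Sum>r. pp p r * E_kernel P n r x y)"

definition lam :: "(nat \<Rightarrow> real) \<Rightarrow> nat \<Rightarrow> real" where
  "lam p r = (\<Sum>s\<le>r. pp p s)"

text \<open>An enumeration of a finite set (the choice does not affect eigenvalues).\<close>
definition enum_set :: "'a set \<Rightarrow> 'a list" where
  "enum_set A = (SOME xs. distinct xs \<and> set xs = A)"

text \<open>Matrix of P_r \<Delta> P_r acting on l^2(Q_r(x0)), in the basis \<delta>_x, x \<in> Q_r(x0).\<close>
definition compressed_Delta :: "(nat \<Rightarrow> 'a set set) \<Rightarrow> (nat \<Rightarrow> nat) \<Rightarrow> (nat \<Rightarrow> real) \<Rightarrow> 'a \<Rightarrow> nat \<Rightarrow> real mat" where
  "compressed_Delta P n p x0 r =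
     (let xs = enum_set (cluster P r x0)
      in mat (length xs) (length xs) (\<lambda>(i, j). Delta_kernel P n p (xs ! i) (xs ! j)))"

definition eigvals :: "real mat \<Rightarrow> real multiset" where
  "eigvals A = proots (char_poly A)"

definition nu :: "(nat \<Rightarrow> 'a set set) \<Rightarrow> (nat \<Rightarrow> nat) \<Rightarrow> (nat \<Rightarrow> real) \<Rightarrow> 'a \<Rightarrow> nat \<Rightarrow> real measure" where
  "nu P n p x0 r = measure_pmf (pmf_of_multiset (eigvals (compressed_Delta P n p x0 r)))"

definition mu :: "(nat \<Rightarrow> nat) \<Rightarrow> (nat \<Rightarrow> real) \<Rightarrow> real measure" where
  "mu n p = measure_of UNIV (sets borel)
     (\<lambda>A. \<Sum>r. ennreal (1 / real (NN n r) - 1 / real (NN n (Suc r))) * indicator A (lam p r))"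

definition weak_star_conv :: "(nat \<Rightarrow> real measure) \<Rightarrow> real measure \<Rightarrow> bool" where
  "weak_star_conv M L \<longleftrightarrow>
     (\<forall>f :: real \<Rightarrow> real. continuous_on UNIV f \<longrightarrow> bounded (range f) \<longrightarrow>
        (\<lambda>r. integral\<^sup>L (M r) f) \<longlonglongrightarrow> integral\<^sup>L L f)"

end

theory Submission
  imports Defs "Jordan_Normal_Form.Schur_Decomposition"
    "Jordan_Normal_Form.Jordan_Normal_Form_Uniqueness"
begin

(* On l^2(Q_R(x0)) the averaging operators E_0, ..., E_R are commuting orthogonal projections
   with E_s E_t = E_(max s t), and every E_r with r >= R is N_R/N_r times E_R. Hence
   P_R Delta P_R is diagonal in the orthogonal decomposition by the projections
   F_u = E_u - E_(u+1) (u < R) and F_R = E_R: it is lambda_u on the range of F_u, which has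
   dimension N_R (1/N_u - 1/N_(u+1)), and some other value on the constants, the range of F_R.
   So nu_R puts the mass 1/N_u - 1/N_(u+1) of mu at lambda_u for every u < R, and its
   remaining mass 1/N_R tends to 0. *)

section \<open>Traces and idempotent matrices\<close>

definition mat_trace :: "'a::comm_ring_1 mat \<Rightarrow> 'a" where
  "mat_trace A = (\<Sum>i<dim_row A. A $$ (i,i))"

lemma mat_trace_mult_comm:
  fixes A B :: "'a::comm_ring_1 mat"
  assumes "A \<in> carrier_mat n m" "B \<in> carrier_mat m n"
  shows "mat_trace (A * B) = mat_trace (B * A)"
proof -
  have "mat_trace (A * B) = (\<Sum>i<n. \<Sum>k<m. A $$ (i,k) * B $$ (k,i))"
    using assms by (simp add: mat_trace_def scalar_prod_def atLeast0LessThan)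
  also have "\<dots> = (\<Sum>k<m. \<Sum>i<n. B $$ (k,i) * A $$ (i,k))"
    by (subst sum.swap) (simp add: mult.commute)
  also have "\<dots> = mat_trace (B * A)"
    using assms by (simp add: mat_trace_def scalar_prod_def atLeast0LessThan)
  finally show ?thesis .
qed

lemma mat_trace_similar:
  fixes A B :: "'a::comm_ring_1 mat"
  assumes "similar_mat A B"
  shows "mat_trace A = mat_trace B"
proof -
  obtain n P Q where car: "{A, B, P, Q} \<subseteq> carrier_mat n n"
    and QP: "Q * P = 1\<^sub>m n" and A: "A = P * B * Q"
    using similar_matD[OF assms] by blast
  have "mat_trace A = mat_trace (P * (B * Q))"
    using A car by (simp add: assoc_mult_mat[of _ n n _ n _ n])
  also have "\<dots> = mat_trace (B * Q * P)"
    using car by (intro mat_trace_mult_comm[of _ n n]) auto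
  also have "\<dots> = mat_trace B"
    using car QP right_mult_one_mat[of B n n] by (simp add: assoc_mult_mat[of _ n n _ n _ n])
  finally show ?thesis .
qed

lemma similar_mat_wit_idempotent:
  assumes wit: "similar_mat_wit A B P Q" and idem: "A * A = A"
  shows "B * B = B"
proof -
  have wit': "similar_mat_wit B A Q P"
    using similar_mat_wit_sym[OF wit] .
  have "similar_mat_wit (B ^\<^sub>m 2) (A ^\<^sub>m 2) Q P"
    using similar_mat_wit_pow[OF wit'] .
  moreover have "A ^\<^sub>m 2 = A" "B ^\<^sub>m 2 = B * B"
    using wit idem unfolding similar_mat_wit_def Let_def by (auto simp: numeral_2_eq_2)
  ultimately show ?thesis
    using wit' unfolding similar_mat_wit_def Let_def by auto
qed

lemma det_one_plus_smult_similar: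
  fixes A B :: "'a::field mat"
  assumes "A \<in> carrier_mat n n" and "similar_mat A B"
  shows "det (1\<^sub>m n + t \<cdot>\<^sub>m A) = det (1\<^sub>m n + t \<cdot>\<^sub>m B)"
proof -
  obtain P Q where wit: "similar_mat_wit A B P Q"
    using assms(2) unfolding similar_mat_def by blast
  have B: "B \<in> carrier_mat n n"
    using similar_mat_witD2[OF assms(1) wit] by blast
  have char: "char_matrix (t \<cdot>\<^sub>m M) (-1) = 1\<^sub>m n + t \<cdot>\<^sub>m M" if "M \<in> carrier_mat n n" for M
    using that unfolding char_matrix_def by (intro eq_matI) auto
  have "similar_mat (char_matrix (t \<cdot>\<^sub>m A) (-1)) (char_matrix (t \<cdot>\<^sub>m B) (-1))"
    unfolding similar_mat_def
    using similar_mat_wit_char_matrix[OF similar_mat_wit_smult[OF wit]] by blast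
  then have "det (char_matrix (t \<cdot>\<^sub>m A) (-1)) = det (char_matrix (t \<cdot>\<^sub>m B) (-1))"
    by (rule det_similar)
  then show ?thesis
    using char assms(1) B by simp
qed

lemma upper_triangular_mult_diag:
  fixes A B :: "'a::comm_ring_1 mat"
  assumes "A \<in> carrier_mat n n" "B \<in> carrier_mat n n" "upper_triangular A" "upper_triangular B"
    and "i < n"
  shows "(A * B) $$ (i,i) = A $$ (i,i) * B $$ (i,i)"
proof -
  have "(A * B) $$ (i,i) = (\<Sum>k<n. A $$ (i,k) * B $$ (k,i))"
    using assms by (simp add: scalar_prod_def atLeast0LessThan)
  also have "\<dots> = (\<Sum>k\<in>{i}. A $$ (i,k) * B $$ (k,i))"
  proof (intro sum.mono_neutral_right ballI)
    fix k assume "k \<in> {..<n} - {i}"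
    then show "A $$ (i,k) * B $$ (k,i) = 0"
      using assms unfolding upper_triangular_def by (cases "k < i") auto
  qed (use assms in auto)
  finally show ?thesis by simp
qed

lemma complex_idempotent_det_one_plus_smult:
  fixes F :: "complex mat"
  assumes F: "F \<in> carrier_mat n n" and idem: "F * F = F"
  obtains k where "mat_trace F = of_nat k" and "\<And>t. det (1\<^sub>m n + t \<cdot>\<^sub>m F) = (1 + t) ^ k"
proof -
  obtain es where "char_poly F = (\<Prod>a\<leftarrow>es. [:- a, 1:])"
    using char_poly_factorized[OF F] by blast
  then obtain B where B: "B \<in> carrier_mat n n" and ut: "upper_triangular B"
    and sim: "similar_mat F B"
    using schur_decomposition_exists[OF F] by blast
  have "B * B = B"
    using sim idem similar_mat_wit_idempotent unfolding similar_mat_def by blast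
  then have diag: "B $$ (i,i) = 0 \<or> B $$ (i,i) = 1" if "i < n" for i
    using upper_triangular_mult_diag[OF B B ut ut that] by (metis mult_cancel_right1 mult_eq_0_iff)
  define K where "K = {i. i < n \<and> B $$ (i,i) = 1}"
  have "mat_trace F = (\<Sum>i<n. B $$ (i,i))"
    using mat_trace_similar[OF sim] B by (simp add: mat_trace_def)
  also have "\<dots> = (\<Sum>i<n. of_bool (i \<in> K))"
    using diag by (intro sum.cong) (auto simp: K_def)
  also have "\<dots> = of_nat (card K)"
    by (simp add: K_def lessThan_def Collect_conj_eq[symmetric])
  finally have "mat_trace F = of_nat (card K)" .
  moreover have "det (1\<^sub>m n + t \<cdot>\<^sub>m F) = (1 + t) ^ card K" for t
  proof -
    have "upper_triangular (1\<^sub>m n + t \<cdot>\<^sub>m B)"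
      using ut B unfolding upper_triangular_def by auto
    then have "det (1\<^sub>m n + t \<cdot>\<^sub>m B) = prod_list (diag_mat (1\<^sub>m n + t \<cdot>\<^sub>m B))"
      by (rule det_upper_triangular) (use B in auto)
    also have "\<dots> = (\<Prod>i<n. 1 + t * B $$ (i,i))"
      using B by (simp add: prod_list_diag_prod atLeast0LessThan)
    also have "\<dots> = (\<Prod>i<n. if i \<in> K then 1 + t else 1)"
      using diag by (intro prod.cong) (auto simp: K_def)
    also have "\<dots> = (1 + t) ^ card K"
      by (simp add: prod.If_cases K_def lessThan_def Collect_conj_eq[symmetric])
    finally show ?thesis
      using det_one_plus_smult_similar[OF F sim] by simp
  qed
  ultimately show ?thesis using that by blast
qed

lemma idempotent_det_one_plus_smult:
  fixes F :: "real mat"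
  assumes F: "F \<in> carrier_mat n n" and idem: "F * F = F"
  shows "mat_trace F \<in> \<nat>" and "det (1\<^sub>m n + t \<cdot>\<^sub>m F) = (1 + t) ^ nat \<lfloor>mat_trace F\<rfloor>"
proof -
  define Fc where "Fc = (of_real_hom.mat_hom F :: complex mat)"
  have Fc: "Fc \<in> carrier_mat n n" and idem_c: "Fc * Fc = Fc"
    using F idem of_real_hom.mat_hom_mult[OF F F, symmetric] unfolding Fc_def by auto
  obtain k where k: "mat_trace Fc = of_nat k"
    and det: "\<And>t. det (1\<^sub>m n + t \<cdot>\<^sub>m Fc) = (1 + t) ^ k"
    using complex_idempotent_det_one_plus_smult[OF Fc idem_c] by blast
  have "of_real (mat_trace F) = mat_trace Fc"
    using F unfolding Fc_def mat_trace_def by simp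
  then have trace: "mat_trace F = of_nat k"
    using k by (metis of_real_eq_iff of_real_of_nat_eq)
  then show "mat_trace F \<in> \<nat>" by simp
  have "of_real_hom.mat_hom (1\<^sub>m n + t \<cdot>\<^sub>m F) = 1\<^sub>m n + complex_of_real t \<cdot>\<^sub>m Fc"
    unfolding Fc_def using F by (intro eq_matI) auto
  then have "complex_of_real (det (1\<^sub>m n + t \<cdot>\<^sub>m F)) = complex_of_real ((1 + t) ^ k)"
    using det by (metis of_real_hom.hom_det of_real_1 of_real_add of_real_power)
  then have "det (1\<^sub>m n + t \<cdot>\<^sub>m F) = (1 + t) ^ k"
    by (simp only: of_real_eq_iff)
  then show "det (1\<^sub>m n + t \<cdot>\<^sub>m F) = (1 + t) ^ nat \<lfloor>mat_trace F\<rfloor>"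
    using trace by simp
qed

lemma det_one_plus_orthogonal_idempotents:
  fixes F :: "nat \<Rightarrow> real mat" and c :: "nat \<Rightarrow> real"
  assumes car: "\<And>u. u < K \<Longrightarrow> F u \<in> carrier_mat n n"
    and idem: "\<And>u. u < K \<Longrightarrow> F u * F u = F u"
    and orth: "\<And>u v. u < K \<Longrightarrow> v < K \<Longrightarrow> u \<noteq> v \<Longrightarrow> F u * F v = 0\<^sub>m n n"
  shows "det (mat n n (\<lambda>(i,j). of_bool (i = j) + (\<Sum>u<K. c u * F u $$ (i,j))))
    = (\<Prod>u<K. (1 + c u) ^ nat \<lfloor>mat_trace (F u)\<rfloor>)"
proof -
  define M where "M k = mat n n (\<lambda>(i,j). of_bool (i = j) + (\<Sum>u<k. c u * F u $$ (i,j)))" for k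
  have M_car: "M k \<in> carrier_mat n n" for k
    by (simp add: M_def)
  have M_0: "M 0 = 1\<^sub>m n"
    by (intro eq_matI) (auto simp: M_def)
  have M_Suc: "M (Suc k) = M k + c k \<cdot>\<^sub>m F k" if "k < K" for k
    using car[OF that] by (intro eq_matI) (auto simp: M_def)
  have M_absorb: "M k * F j = F j" if "k \<le> j" "j < K" for k j
    using that(1)
  proof (induction k)
    case 0
    then show ?case using M_0 car[OF \<open>j < K\<close>] by simp
  next
    case (Suc k)
    then have k: "k < K" "k \<noteq> j" using that by auto
    have "M (Suc k) * F j = M k * F j + (c k \<cdot>\<^sub>m F k) * F j"
      unfolding M_Suc[OF k(1)] using M_car car k(1) that(2)
      by (intro add_mult_distrib_mat[of _ n n]) auto
    also have "(c k \<cdot>\<^sub>m F k) * F j = c k \<cdot>\<^sub>m (F k * F j)"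
      using car k(1) that(2) by (intro mult_smult_assoc_mat[of _ n n]) auto
    finally show ?case
      using Suc orth[OF k(1) that(2) k(2)] car[OF that(2)] by simp
  qed
  have M_Suc_mult: "M (Suc k) = M k * (1\<^sub>m n + c k \<cdot>\<^sub>m F k)" if "k < K" for k
  proof -
    have "M k * (1\<^sub>m n + c k \<cdot>\<^sub>m F k) = M k * 1\<^sub>m n + M k * (c k \<cdot>\<^sub>m F k)"
      using M_car car[OF that] by (intro mult_add_distrib_mat[of _ n n]) auto
    also have "\<dots> = M k + c k \<cdot>\<^sub>m (M k * F k)"
      using M_car[of k] car[OF that] by (simp add: mult_smult_distrib[of _ n n])
    finally have "M k * (1\<^sub>m n + c k \<cdot>\<^sub>m F k) = M k + c k \<cdot>\<^sub>m (M k * F k)" .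
    then show ?thesis using M_Suc[OF that] M_absorb[OF le_refl that] by simp
  qed
  have "det (M k) = (\<Prod>u<k. (1 + c u) ^ nat \<lfloor>mat_trace (F u)\<rfloor>)" if "k \<le> K" for k
    using that
  proof (induction k)
    case 0
    then show ?case using M_0 by simp
  next
    case (Suc k)
    then have k: "k < K" by simp
    have "det (M (Suc k)) = det (M k) * det (1\<^sub>m n + c k \<cdot>\<^sub>m F k)"
      using M_Suc_mult[OF k] det_mult[OF M_car[of k], of "1\<^sub>m n + c k \<cdot>\<^sub>m F k"] car[OF k] by simp
    then show ?case
      using Suc idempotent_det_one_plus_smult(2)[OF car[OF k] idem[OF k]] by simp
  qed
  then show ?thesis by (simp add: M_def)
qed

section \<open>Discrete measures\<close>

lemma summation_by_parts_lessThan: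
  fixes q a :: "nat \<Rightarrow> 'a::comm_ring"
  shows "(\<Sum>u<R. (\<Sum>s\<le>u. q s) * (a u - a (Suc u))) = (\<Sum>u<R. q u * a u) - (\<Sum>s<R. q s) * a R"
  by (induction R) (simp_all add: algebra_simps flip: lessThan_Suc_atMost)

lemma integral_pmf_of_multiset_sum:
  fixes c :: "'i \<Rightarrow> nat" and v :: "'i \<Rightarrow> 'a" and g :: "'a \<Rightarrow> real"
  assumes "finite I" and "(\<Sum>u\<in>I. c u) \<noteq> 0"
  shows "(\<integral>x. g x \<partial>measure_pmf (pmf_of_multiset (\<Sum>u\<in>I. repeat_mset (c u) {#v u#})))
    = (\<Sum>u\<in>I. real (c u) * g (v u)) / real (\<Sum>u\<in>I. c u)"
proof -
  define M where "M = (\<Sum>u\<in>I. repeat_mset (c u) {#v u#})"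
  have size: "size M = (\<Sum>u\<in>I. c u)"
    by (simp add: M_def)
  then have "M \<noteq> {#}"
    using assms(2) by auto
  have count: "real (count M a) = (\<Sum>u\<in>I. if a = v u then real (c u) else 0)" for a
    by (simp add: M_def count_sum of_nat_sum if_distrib cong: if_cong)
  have "(\<Sum>a\<in>v ` I. g a * real (count M a))
      = (\<Sum>a\<in>v ` I. \<Sum>u\<in>I. if a = v u then real (c u) * g a else 0)"
    unfolding count sum_distrib_left by (intro sum.cong refl) (simp add: mult.commute)
  also have "\<dots> = (\<Sum>u\<in>I. real (c u) * g (v u))"
    using assms(1) by (subst sum.swap) (simp add: sum.delta)
  finally have weights: "(\<Sum>a\<in>v ` I. g a * real (count M a)) = (\<Sum>u\<in>I. real (c u) * g (v u))" .
  have "(\<integral>x. g x \<partial>measure_pmf (pmf_of_multiset M)) = (\<Sum>a\<in>v ` I. g a * pmf (pmf_of_multiset M) a)"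
    using \<open>M \<noteq> {#}\<close> assms(1)
    by (intro integral_measure_pmf_real) (auto simp: M_def set_mset_sum split: if_splits)
  also have "\<dots> = (\<Sum>a\<in>v ` I. g a * real (count M a)) / real (size M)"
    using \<open>M \<noteq> {#}\<close> by (simp add: sum_divide_distrib)
  finally show ?thesis
    using size weights by (simp add: M_def)
qed

definition mu_weight :: "(nat \<Rightarrow> nat) \<Rightarrow> nat \<Rightarrow> real" where
  "mu_weight n r = 1 / real (NN n r) - 1 / real (NN n (Suc r))"

lemma mu_eq_distr:
  "mu n p = distr (density (count_space UNIV) (\<lambda>r. ennreal (mu_weight n r))) borel (lam p)"
proof -
  let ?W = "density (count_space UNIV) (\<lambda>r. ennreal (mu_weight n r))"
  let ?M = "distr ?W borel (lam p)"
  have "mu n p = measure_of UNIV (sets borel) (emeasure ?M)"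
    unfolding mu_def
  proof (rule measure_of_eq)
    show "sets (borel :: real measure) \<subseteq> Pow UNIV" by simp
    fix A :: "real set" assume "A \<in> sigma_sets UNIV (sets borel)"
    then have A: "A \<in> sets borel"
      by (metis sets.sigma_sets_eq space_borel)
    have "emeasure ?M A = emeasure ?W (lam p -` A)"
      by (simp add: emeasure_distr A measurable_cong_sets[OF sets_density refl])
    also have "\<dots> = (\<Sum>r. ennreal (mu_weight n r) * indicator (lam p -` A) r)"
      by (simp add: emeasure_density nn_integral_count_space_nat mult.commute
          nn_integral_count_space_indicator)
    finally show "(\<Sum>r. ennreal (1 / real (NN n r) - 1 / real (NN n (Suc r))) * indicator A (lam p r))
        = emeasure ?M A"
      by (simp add: mu_weight_def indicator_def)
  qed
  then show ?thesis
    using measure_of_of_measure[of ?M] by simp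
qed

lemma summable_abs_pp:
  assumes "\<And>r. r \<ge> 1 \<Longrightarrow> p r > 0" and "(\<lambda>r. p (Suc r)) sums 1"
  shows "summable (\<lambda>r. \<bar>pp p r\<bar>)"
proof -
  have "(\<lambda>r. \<bar>pp p (Suc r)\<bar>) = (\<lambda>r. p (Suc r))"
    using assms(1) by (intro ext) (simp add: pp_def abs_of_pos)
  then have "summable (\<lambda>r. \<bar>pp p (Suc r)\<bar>)"
    using sums_summable[OF assms(2)] by simp
  then show ?thesis
    using summable_Suc_iff[of "\<lambda>r. \<bar>pp p r\<bar>"] by blast
qed

section \<open>Hierarchical structures\<close>

locale hierarchy =
  fixes P :: "nat \<Rightarrow> 'a set set" and n :: "nat \<Rightarrow> nat"
  assumes hierarchical: "hierarchical P n"
begin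

lemma n_pos: "n r > 0"
  and partition_P: "partition_on UNIV (P r)"
  and n_0: "n 0 = 1"
  and P_0_singleton: "C \<in> P 0 \<Longrightarrow> \<exists>x. C = {x}"
  and P_Suc_union: "C \<in> P (Suc r) \<Longrightarrow> \<exists>S. S \<subseteq> P r \<and> finite S \<and> card S = n (Suc r) \<and> C = \<Union>S"
  and common_cluster: "\<exists>r. \<exists>C\<in>P r. x \<in> C \<and> y \<in> C"
  using hierarchical unfolding hierarchical_def by (simp_all, metis diff_Suc_1 le_add1 plus_1_eq_Suc)

lemma ex1_cluster: "\<exists>!C. C \<in> P r \<and> x \<in> C"
proof -
  have "x \<in> \<Union>(P r)"
    using partition_onD1[OF partition_P[of r]] by simp
  moreover have "C = C'" if "C \<in> P r" "x \<in> C" "C' \<in> P r" "x \<in> C'" for C C'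
    using partition_onD2[OF partition_P[of r]] that unfolding disjoint_def by blast
  ultimately show ?thesis by blast
qed

lemma cluster_in: "cluster P r x \<in> P r" and mem_cluster: "x \<in> cluster P r x"
  using theI'[OF ex1_cluster[of r x]] unfolding cluster_def by auto

lemma cluster_eqI: "C \<in> P r \<Longrightarrow> x \<in> C \<Longrightarrow> cluster P r x = C"
  using ex1_cluster[of r x] cluster_in[of r x] mem_cluster[of x r] by blast

lemma cluster_eq_of_mem: "y \<in> cluster P r x \<Longrightarrow> cluster P r y = cluster P r x"
  by (rule cluster_eqI[OF cluster_in])

lemma mem_cluster_commute: "y \<in> cluster P r x \<longleftrightarrow> x \<in> cluster P r y"
  using cluster_eq_of_mem[of y r x] cluster_eq_of_mem[of x r y] mem_cluster[of x r] mem_cluster[of y r]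
  by auto

lemma cluster_Suc_union:
  obtains S where "S \<subseteq> P r" "finite S" "card S = n (Suc r)" "cluster P (Suc r) x = \<Union>S"
  using P_Suc_union[OF cluster_in[of "Suc r" x]] by blast

lemma cluster_subset_Suc: "cluster P r x \<subseteq> cluster P (Suc r) x"
proof -
  obtain S where S: "S \<subseteq> P r" "cluster P (Suc r) x = \<Union>S"
    by (rule cluster_Suc_union)
  then obtain D where D: "D \<in> S" "x \<in> D"
    using mem_cluster[of x "Suc r"] by auto
  then have "cluster P r x = D"
    using S(1) cluster_eqI by blast
  then show ?thesis
    using S D by auto
qed

lemma cluster_mono: "s \<le> r \<Longrightarrow> cluster P s x \<subseteq> cluster P r x"
  by (rule lift_Suc_mono_le[of "\<lambda>r. cluster P r x", OF cluster_subset_Suc])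

lemma cluster_0: "cluster P 0 x = {x}"
proof -
  obtain y where "cluster P 0 x = {y}"
    using P_0_singleton[OF cluster_in[of 0 x]] by blast
  then show ?thesis using mem_cluster[of x 0] by simp
qed

lemma NN_0: "NN n 0 = 1"
  unfolding NN_def using n_0 by simp

lemma NN_Suc: "NN n (Suc r) = NN n r * n (Suc r)"
  unfolding NN_def by simp

lemma NN_pos: "NN n r > 0"
  unfolding NN_def using n_pos by (simp add: prod_pos)

lemma NN_mono: "s \<le> r \<Longrightarrow> NN n s \<le> NN n r"
proof (rule lift_Suc_mono_le[of "NN n"])
  show "NN n r \<le> NN n (Suc r)" for r
    using NN_Suc n_pos[of "Suc r"] by simp
qed

lemma finite_card_cluster: "finite (cluster P r x) \<and> card (cluster P r x) = NN n r"
proof (induction r arbitrary: x)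
  case 0
  then show ?case using cluster_0 NN_0 by simp
next
  case (Suc r)
  obtain S where S: "S \<subseteq> P r" "finite S" "card S = n (Suc r)" "cluster P (Suc r) x = \<Union>S"
    by (rule cluster_Suc_union)
  have D: "finite D \<and> card D = NN n r" if "D \<in> S" for D
  proof -
    have "D \<in> P r" using S(1) that by blast
    moreover have "D \<noteq> {}"
      using partition_onD3[OF partition_P[of r]] \<open>D \<in> P r\<close> by auto
    then obtain y where "y \<in> D" by blast
    ultimately have "cluster P r y = D"
      by (rule cluster_eqI)
    then show ?thesis
      using Suc.IH[of y] by simp
  qed
  have "disjoint S"
    using partition_onD2[OF partition_P] S(1) unfolding disjoint_def by blast
  then have "card (\<Union>S) = (\<Sum>D\<in>S. card D)"
    using D by (intro card_Union_disjoint) auto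
  also have "\<dots> = NN n (Suc r)"
    using D S(3) NN_Suc[of r] by simp
  finally show ?case
    using S(2,4) D by auto
qed

lemma finite_cluster: "finite (cluster P r x)"
  and card_cluster: "card (cluster P r x) = NN n r"
  using finite_card_cluster by auto

lemma hdist_le_iff: "hdist P x y \<le> r \<longleftrightarrow> y \<in> cluster P r x"
proof
  obtain r0 C where "C \<in> P r0" "x \<in> C" "y \<in> C"
    using common_cluster[of x y] by blast
  then have "y \<in> cluster P r0 x"
    using cluster_eqI by blast
  then have "y \<in> cluster P (hdist P x y) x"
    unfolding hdist_def by (rule LeastI)
  then show "y \<in> cluster P r x" if "hdist P x y \<le> r"
    using cluster_mono[OF that] by blast
next
  show "y \<in> cluster P r x \<Longrightarrow> hdist P x y \<le> r"
    unfolding hdist_def by (rule Least_le)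
qed

lemma finite_subset_cluster: "finite S \<Longrightarrow> \<exists>r. S \<subseteq> cluster P r x"
proof (induction S rule: finite_induct)
  case empty
  then show ?case by simp
next
  case (insert y S)
  then obtain r where "S \<subseteq> cluster P r x" by blast
  moreover obtain r' C where "C \<in> P r'" "x \<in> C" "y \<in> C"
    using common_cluster[of x y] by blast
  then have "y \<in> cluster P r' x"
    using cluster_eqI by blast
  ultimately have "insert y S \<subseteq> cluster P (max r r') x"
    using cluster_mono[of r "max r r'" x] cluster_mono[of r' "max r r'" x] by auto
  then show ?case by blast
qed

lemma inverse_NN_tendsto_0:
  assumes "infinite (UNIV :: 'a set)"
  shows "(\<lambda>r. 1 / real (NN n r)) \<longlonglongrightarrow> 0"
proof -
  have "filterlim (\<lambda>r. real (NN n r)) at_top sequentially"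
    unfolding filterlim_at_top eventually_sequentially
  proof
    fix K :: real and x :: 'a
    obtain S :: "'a set" where S: "finite S" "card S = nat \<lceil>K\<rceil>"
      using infinite_arbitrarily_large[OF assms] by blast
    obtain r where "S \<subseteq> cluster P r x"
      using finite_subset_cluster[OF S(1)] by blast
    then have "card S \<le> NN n r"
      using card_mono[OF finite_cluster] card_cluster by metis
    then have "K \<le> real (NN n r)"
      using S(2) real_nat_ceiling_ge[of K] by linarith
    then show "\<exists>r. \<forall>m\<ge>r. K \<le> real (NN n m)"
      using NN_mono by (meson of_nat_le_iff order_trans)
  qed
  then show ?thesis
    by (intro tendsto_divide_0[OF tendsto_const] filterlim_at_top_imp_at_infinity)
qed

lemma mu_weight_nonneg: "mu_weight n r \<ge> 0"
  using NN_mono[of r "Suc r"] NN_pos[of r] by (simp add: mu_weight_def frac_le)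

lemma mu_weight_sums:
  assumes "infinite (UNIV :: 'a set)"
  shows "mu_weight n sums 1"
proof -
  have "(\<lambda>r. 1 / real (NN n (Suc r)) - 1 / real (NN n r)) sums (0 - 1 / real (NN n 0))"
    by (rule telescope_sums[OF inverse_NN_tendsto_0[OF assms]])
  then show ?thesis
    using sums_minus NN_0 unfolding mu_weight_def by fastforce
qed

lemma integral_mu_sums:
  assumes "infinite (UNIV :: 'a set)"
    and g: "g \<in> borel_measurable borel" and B: "\<And>x. \<bar>g x\<bar> \<le> B"
  shows "(\<lambda>r. mu_weight n r * g (lam p r)) sums integral\<^sup>L (mu n p) g"
proof -
  let ?W = "density (count_space UNIV) (\<lambda>r. ennreal (mu_weight n r))"
  have "integral\<^sup>L (mu n p) g = integral\<^sup>L ?W (\<lambda>r. g (lam p r))"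
    unfolding mu_eq_distr
    by (rule integral_distr[OF _ g]) (simp add: measurable_cong_sets[OF sets_density refl])
  also have "\<dots> = integral\<^sup>L (count_space UNIV) (\<lambda>r. mu_weight n r * g (lam p r))"
    by (simp add: integral_density mu_weight_nonneg)
  finally have "integral\<^sup>L (mu n p) g = integral\<^sup>L (count_space UNIV) (\<lambda>r. mu_weight n r * g (lam p r))" .
  moreover have "summable (\<lambda>r. norm (mu_weight n r * g (lam p r)))"
  proof (rule summable_comparison_test')
    show "summable (\<lambda>r. B * mu_weight n r)"
      using mu_weight_sums[OF assms(1)] by (intro summable_mult sums_summable)
    show "norm (norm (mu_weight n r * g (lam p r))) \<le> B * mu_weight n r" for r
      using B[of "lam p r"] mu_weight_nonneg[of r]
      by (simp add: abs_mult mult_left_mono mult.commute[of B])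
  qed
  ultimately show ?thesis
    by (simp add: integrable_count_space_nat_iff sums_integral_count_space_nat)
qed

end

section \<open>The compressed operator and its spectrum\<close>

locale cluster_enumeration = hierarchy P n for P :: "nat \<Rightarrow> 'a set set" and n +
  fixes x0 :: 'a and R :: nat
begin

definition xs :: "'a list" where
  "xs = enum_set (cluster P R x0)"

definition N :: nat where
  "N = length xs"

lemma distinct_xs: "distinct xs" and set_xs: "set xs = cluster P R x0"
proof -
  have "\<exists>ys. distinct ys \<and> set ys = cluster P R x0"
    using finite_distinct_list[OF finite_cluster] by blast
  then have "distinct xs \<and> set xs = cluster P R x0"
    unfolding xs_def enum_set_def by (rule someI_ex)
  then show "distinct xs" "set xs = cluster P R x0" by auto
qed

lemma N_eq: "N = NN n R"
  using distinct_card[OF distinct_xs] set_xs card_cluster unfolding N_def by simp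

lemma nth_xs_in_cluster: "i < N \<Longrightarrow> xs ! i \<in> cluster P R x0"
  using set_xs nth_mem unfolding N_def by blast

lemma N_pos: "N > 0"
  using N_eq NN_pos by simp

lemma nth_xs_mem_cluster: "i < N \<Longrightarrow> j < N \<Longrightarrow> xs ! j \<in> cluster P R (xs ! i)"
  using nth_xs_in_cluster[of j] cluster_eq_of_mem[OF nth_xs_in_cluster[of i]] by simp

lemma cluster_nth_xs_subset: "i < N \<Longrightarrow> s \<le> R \<Longrightarrow> cluster P s (xs ! i) \<subseteq> set xs"
  using cluster_mono[of s R] cluster_eq_of_mem[OF nth_xs_in_cluster] set_xs by blast

lemma card_cluster_indices:
  assumes "i < N" and "s \<le> R"
  shows "card {k. k < N \<and> xs ! k \<in> cluster P s (xs ! i)} = NN n s"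
proof -
  let ?K = "{k. k < N \<and> xs ! k \<in> cluster P s (xs ! i)}"
  have "bij_betw (nth xs) ?K (cluster P s (xs ! i))"
  proof (rule bij_betw_imageI)
    show "inj_on (nth xs) ?K"
      using inj_on_nth[OF distinct_xs] unfolding N_def by auto
    show "nth xs ` ?K = cluster P s (xs ! i)"
    proof
      show "cluster P s (xs ! i) \<subseteq> nth xs ` ?K"
      proof
        fix y assume y: "y \<in> cluster P s (xs ! i)"
        then have "y \<in> set xs"
          using cluster_nth_xs_subset[OF assms] by blast
        then obtain k where "k < N" "xs ! k = y"
          unfolding N_def by (auto simp: in_set_conv_nth)
        then show "y \<in> nth xs ` ?K"
          using y by auto
      qed
    qed auto
  qed
  then have "card ?K = card (cluster P s (xs ! i))"
    by (rule bij_betw_same_card)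
  then show ?thesis
    using card_cluster by simp
qed

text \<open>\<open>avg s\<close> is the matrix of \<open>E\<^sub>s\<close> compressed to \<open>Q\<^sub>R(x\<^sub>0)\<close> in the basis
  enumerated by \<open>xs\<close>. It is set to \<open>0\<close> for \<open>s > R\<close>, so that the differences
  \<open>avg u - avg (Suc u)\<close>, \<open>u \<le> R\<close>, telescope to the identity.\<close>

definition avg :: "nat \<Rightarrow> nat \<Rightarrow> nat \<Rightarrow> real" where
  "avg s i j = (if s \<le> R \<and> xs ! j \<in> cluster P s (xs ! i) then 1 / real (NN n s) else 0)"

lemma avg_commute: "avg s i j = avg s j i"
  unfolding avg_def using mem_cluster_commute by simp

lemma avg_diag: "avg s i i = (if s \<le> R then 1 / real (NN n s) else 0)"
  unfolding avg_def using mem_cluster by simp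

lemma avg_0:
  assumes "i < N" and "j < N"
  shows "avg 0 i j = of_bool (i = j)"
  using nth_eq_iff_index_eq[OF distinct_xs assms[unfolded N_def]]
  by (auto simp: avg_def cluster_0 NN_0)

lemma avg_R:
  assumes "i < N" and "j < N"
  shows "avg R i j = 1 / real N"
  using nth_xs_mem_cluster[OF assms] by (simp add: avg_def N_eq)

lemma avg_beyond: "R < s \<Longrightarrow> avg s i j = 0"
  by (simp add: avg_def)

lemma E_kernel_nth: "r \<le> R \<Longrightarrow> E_kernel P n r (xs ! i) (xs ! j) = avg r i j"
  by (simp add: E_kernel_def avg_def hdist_le_iff)

lemma avg_row_sum:
  assumes "i < N" and "s \<le> R"
  shows "(\<Sum>k<N. avg s i k) = 1"
proof -
  have "(\<Sum>k<N. avg s i k) = (\<Sum>k | k < N \<and> xs ! k \<in> cluster P s (xs ! i). 1 / real (NN n s))"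
    unfolding avg_def using assms(2) by (simp add: sum.If_cases lessThan_def Collect_conj_eq)
  then show ?thesis
    using card_cluster_indices[OF assms] NN_pos[of s] by simp
qed

lemma avg_mult:
  assumes "i < N" and "j < N"
  shows "(\<Sum>k<N. avg s i k * avg t k j) = avg (max s t) i j"
proof -
  have le: "(\<Sum>k<N. avg s i k * avg t k j) = avg t i j" if "s \<le> t" "i < N" for s t i j
  proof (cases "t \<le> R")
    case True
    have eq: "avg s i k * avg t k j = avg s i k * avg t i j" for k
    proof (cases "avg s i k = 0")
      case False
      then have "xs ! k \<in> cluster P t (xs ! i)"
        using cluster_mono[OF \<open>s \<le> t\<close>] by (auto simp: avg_def split: if_splits)
      then show ?thesis
        using cluster_eq_of_mem by (simp add: avg_def)
    qed simp
    have "(\<Sum>k<N. avg s i k * avg t k j) = (\<Sum>k<N. avg s i k) * avg t i j"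
      by (simp only: eq sum_distrib_right)
    then show ?thesis
      using avg_row_sum[OF that(2)] \<open>s \<le> t\<close> True by simp
  next
    case False
    then show ?thesis by (simp add: avg_def)
  qed
  show ?thesis
  proof (cases "s \<le> t")
    case True
    then show ?thesis using le[OF True assms(1)] by (simp add: max_def)
  next
    case False
    have "(\<Sum>k<N. avg s i k * avg t k j) = (\<Sum>k<N. avg t j k * avg s k i)"
      by (simp add: avg_commute mult.commute)
    also have "\<dots> = avg s j i"
      using le False assms(2) by simp
    finally show ?thesis
      using False by (simp add: avg_commute max_def)
  qed
qed

definition level_proj :: "nat \<Rightarrow> real mat" where
  "level_proj u = mat N N (\<lambda>(i,j). avg u i j - avg (Suc u) i j)"

lemma level_proj_carrier: "level_proj u \<in> carrier_mat N N"
  unfolding level_proj_def by simp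

lemma level_proj_mult: "level_proj u * level_proj v = (if u = v then level_proj u else 0\<^sub>m N N)"
proof (rule eq_matI)
  fix i j assume "i < dim_row (if u = v then level_proj u else 0\<^sub>m N N)"
    and "j < dim_col (if u = v then level_proj u else 0\<^sub>m N N)"
  then have ij: "i < N" "j < N"
    by (auto simp: level_proj_def split: if_splits)
  have "(level_proj u * level_proj v) $$ (i,j) = (\<Sum>k<N. (avg u i k - avg (Suc u) i k) * (avg v k j - avg (Suc v) k j))"
    using ij by (simp add: level_proj_def scalar_prod_def atLeast0LessThan)
  also have "\<dots> = avg (max u v) i j - avg (max u (Suc v)) i j
      - avg (max (Suc u) v) i j + avg (max (Suc u) (Suc v)) i j"
    unfolding left_diff_distrib right_diff_distrib sum_subtractf avg_mult[OF ij] by linarith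
  also have "\<dots> = (if u = v then avg u i j - avg (Suc u) i j else 0)"
  proof (cases u v rule: linorder_cases)
    case less
    then have "max u v = v" "max u (Suc v) = Suc v" "max (Suc u) v = v" "max (Suc u) (Suc v) = Suc v"
      by auto
    then show ?thesis using less by simp
  next
    case equal
    then show ?thesis by simp
  next
    case greater
    then have "max u v = u" "max u (Suc v) = u" "max (Suc u) v = Suc u" "max (Suc u) (Suc v) = Suc u"
      by auto
    then show ?thesis using greater by simp
  qed
  also have "\<dots> = (if u = v then level_proj u else 0\<^sub>m N N) $$ (i,j)"
    using ij by (simp add: level_proj_def)
  finally show "(level_proj u * level_proj v) $$ (i,j) = (if u = v then level_proj u else 0\<^sub>m N N) $$ (i,j)" .
qed (auto simp: level_proj_def)

lemma sum_level_proj: "i < N \<Longrightarrow> j < N \<Longrightarrow> (\<Sum>u<Suc R. level_proj u $$ (i,j)) = of_bool (i = j)"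
  using sum_lessThan_telescope'[of "\<lambda>u. avg u i j" "Suc R"] avg_0
  by (simp add: level_proj_def avg_def)

lemma trace_level_proj_less: "u < R \<Longrightarrow> mat_trace (level_proj u) = real N * mu_weight n u"
  by (simp add: mat_trace_def level_proj_def avg_diag mu_weight_def)

lemma trace_level_proj_R: "mat_trace (level_proj R) = 1"
  using N_pos by (simp add: mat_trace_def level_proj_def avg_diag N_eq)

definition level_rank :: "nat \<Rightarrow> nat" where
  "level_rank u = nat \<lfloor>mat_trace (level_proj u)\<rfloor>"

lemma of_nat_level_rank: "real (level_rank u) = mat_trace (level_proj u)"
proof -
  have "mat_trace (level_proj u) \<in> \<nat>"
    using idempotent_det_one_plus_smult(1)[OF level_proj_carrier] level_proj_mult by simp
  then show ?thesis
    unfolding level_rank_def by (auto elim: Nats_cases)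
qed

lemma sum_trace_level_proj: "(\<Sum>u<Suc R. mat_trace (level_proj u)) = real N"
proof -
  have "(\<Sum>u<Suc R. mat_trace (level_proj u)) = (\<Sum>u<Suc R. \<Sum>i<N. level_proj u $$ (i,i))"
    by (simp add: mat_trace_def level_proj_def)
  also have "\<dots> = (\<Sum>i<N. \<Sum>u<Suc R. level_proj u $$ (i,i))"
    by (rule sum.swap)
  also have "\<dots> = (\<Sum>i<N. 1)"
  proof (intro sum.cong refl)
    show "(\<Sum>u<Suc R. level_proj u $$ (i,i)) = 1" if "i \<in> {..<N}" for i
      using sum_level_proj[of i i] that by simp
  qed
  also have "\<dots> = real N"
    by simp
  finally show ?thesis .
qed

end

locale compressed_laplacian = cluster_enumeration P n x0 R
  for P :: "nat \<Rightarrow> 'a set set" and n x0 R +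
  fixes p :: "nat \<Rightarrow> real"
  assumes pp_abs_summable: "summable (\<lambda>r. \<bar>pp p r\<bar>)"
begin

text \<open>On \<open>\<ell>\<^sup>2(Q\<^sub>R(x\<^sub>0))\<close> every \<open>E\<^sub>r\<close> with \<open>r \<ge> R\<close> is \<open>N\<^sub>R/N\<^sub>r\<close> times \<open>E\<^sub>R\<close>; this yields the
  term \<open>N * tail\<close> in the eigenvalue \<open>eig R\<close> belonging to the constants.\<close>

definition tail :: real where
  "tail = (\<Sum>r. pp p (r + R) / real (NN n (r + R)))"

lemma Delta_kernel_nth:
  assumes "i < N" and "j < N"
  shows "Delta_kernel P n p (xs ! i) (xs ! j) = (\<Sum>u<R. pp p u * avg u i j) + tail"
proof -
  let ?g = "\<lambda>r. pp p r * E_kernel P n r (xs ! i) (xs ! j)"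
  have "\<bar>E_kernel P n r x y\<bar> \<le> 1" for r x y
    using NN_pos[of r] by (simp add: E_kernel_def)
  then have "norm (?g r) \<le> \<bar>pp p r\<bar>" for r
    by (simp add: abs_mult mult_left_le)
  then have "summable ?g"
    by (intro summable_comparison_test'[OF pp_abs_summable])
  then have "Delta_kernel P n p (xs ! i) (xs ! j) = (\<Sum>r. ?g (r + R)) + (\<Sum>r<R. ?g r)"
    unfolding Delta_kernel_def by (rule suminf_split_initial_segment)
  moreover have "?g (r + R) = pp p (r + R) / real (NN n (r + R))" for r
    using cluster_mono[of R "r + R"] nth_xs_mem_cluster[OF assms]
    by (auto simp: E_kernel_def hdist_le_iff)
  moreover have "(\<Sum>r<R. ?g r) = (\<Sum>u<R. pp p u * avg u i j)"
    by (simp add: E_kernel_nth)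
  ultimately show ?thesis
    by (simp add: tail_def)
qed

definition eig :: "nat \<Rightarrow> real" where
  "eig u = (if u < R then lam p u else (\<Sum>s<R. pp p s) + real N * tail)"

lemma Delta_kernel_spectral:
  assumes "i < N" and "j < N"
  shows "Delta_kernel P n p (xs ! i) (xs ! j) = (\<Sum>u<Suc R. eig u * level_proj u $$ (i,j))"
proof -
  have "(\<Sum>u<Suc R. eig u * level_proj u $$ (i,j))
      = (\<Sum>u<R. lam p u * (avg u i j - avg (Suc u) i j)) + eig R * avg R i j"
    using assms by (simp add: eig_def level_proj_def avg_beyond)
  also have "(\<Sum>u<R. lam p u * (avg u i j - avg (Suc u) i j))
      = (\<Sum>u<R. pp p u * avg u i j) - (\<Sum>s<R. pp p s) * avg R i j"
    unfolding lam_def by (rule summation_by_parts_lessThan)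
  also have "eig R * avg R i j = (\<Sum>s<R. pp p s) * avg R i j + tail"
    using N_pos by (simp add: eig_def avg_R[OF assms] field_simps)
  finally show ?thesis
    using Delta_kernel_nth[OF assms] by simp
qed

lemma compressed_Delta_eq:
  "compressed_Delta P n p x0 R = mat N N (\<lambda>(i,j). Delta_kernel P n p (xs ! i) (xs ! j))"
  unfolding compressed_Delta_def Let_def xs_def[symmetric] N_def ..

lemma char_poly_compressed_Delta:
  "char_poly (compressed_Delta P n p x0 R) = (\<Prod>u<Suc R. [:- eig u, 1:] ^ level_rank u)"
proof -
  let ?A = "compressed_Delta P n p x0 R"
  have car: "?A \<in> carrier_mat N N"
    by (simp add: compressed_Delta_eq)
  have "poly (char_poly ?A) = poly (\<Prod>u<Suc R. [:- eig u, 1:] ^ level_rank u)"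
  proof
    fix x
    have "- char_matrix ?A x
        = mat N N (\<lambda>(i,j). of_bool (i = j) + (\<Sum>u<Suc R. (x - eig u - 1) * level_proj u $$ (i,j)))"
    proof (rule eq_matI)
      fix i j assume "i < dim_row (mat N N (\<lambda>(i,j). of_bool (i = j)
          + (\<Sum>u<Suc R. (x - eig u - 1) * level_proj u $$ (i,j))))"
        and "j < dim_col (mat N N (\<lambda>(i,j). of_bool (i = j)
          + (\<Sum>u<Suc R. (x - eig u - 1) * level_proj u $$ (i,j))))"
      then have ij: "i < N" "j < N" by auto
      have "(\<Sum>u<Suc R. (x - eig u - 1) * level_proj u $$ (i,j))
          = (x - 1) * (\<Sum>u<Suc R. level_proj u $$ (i,j)) - (\<Sum>u<Suc R. eig u * level_proj u $$ (i,j))"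
        by (simp add: algebra_simps sum_subtractf sum_distrib_left del: sum.lessThan_Suc)
      also have "\<dots> = (x - 1) * of_bool (i = j) - Delta_kernel P n p (xs ! i) (xs ! j)"
        by (simp only: sum_level_proj[OF ij] Delta_kernel_spectral[OF ij])
      finally show "(- char_matrix ?A x) $$ (i,j) = mat N N (\<lambda>(i,j). of_bool (i = j)
          + (\<Sum>u<Suc R. (x - eig u - 1) * level_proj u $$ (i,j))) $$ (i,j)"
        using ij car by (simp add: char_matrix_def compressed_Delta_eq del: sum.lessThan_Suc)
    qed (use car in \<open>auto simp: char_matrix_def\<close>)
    then have "poly (char_poly ?A) x = (\<Prod>u<Suc R. (1 + (x - eig u - 1)) ^ level_rank u)"
      using char_poly_matrix[OF car] level_proj_carrier level_proj_mult
        det_one_plus_orthogonal_idempotents[of "Suc R" level_proj N "\<lambda>u. x - eig u - 1"]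
      by (simp add: level_rank_def)
    then show "poly (char_poly ?A) x = poly (\<Prod>u<Suc R. [:- eig u, 1:] ^ level_rank u) x"
      by (simp add: poly_prod poly_power)
  qed
  then show ?thesis
    by (simp only: poly_eq_poly_eq_iff)
qed

lemma eigvals_compressed_Delta:
  "eigvals (compressed_Delta P n p x0 R) = (\<Sum>u<Suc R. repeat_mset (level_rank u) {#eig u#})"
  unfolding eigvals_def char_poly_compressed_Delta
  by (subst proots_prod) (simp_all add: proots_power proots_linear_factor)

lemma integral_nu:
  "integral\<^sup>L (nu P n p x0 R) g = (\<Sum>u<R. mu_weight n u * g (lam p u)) + g (eig R) / real (NN n R)"
proof -
  have "real (\<Sum>u<Suc R. level_rank u) = real N"
    using sum_trace_level_proj by (simp add: of_nat_level_rank)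
  then have ranks: "(\<Sum>u<Suc R. level_rank u) = N"
    by (simp only: of_nat_eq_iff)
  have "integral\<^sup>L (nu P n p x0 R) g
      = (\<Sum>u<Suc R. real (level_rank u) * g (eig u)) / real (\<Sum>u<Suc R. level_rank u)"
    unfolding nu_def eigvals_compressed_Delta
    by (rule integral_pmf_of_multiset_sum) (use ranks N_pos in auto)
  also have "\<dots> = (\<Sum>u<Suc R. real (level_rank u) * g (eig u)) / real N"
    by (simp only: ranks)
  also have "\<dots> = (\<Sum>u<R. real N * mu_weight n u * g (lam p u)) / real N + g (eig R) / real N"
    by (simp add: of_nat_level_rank trace_level_proj_less trace_level_proj_R eig_def add_divide_distrib)
  finally show ?thesis
    using N_pos by (simp add: N_eq sum_divide_distrib)
qed

end

lemma (in hierarchy) integral_nu_approx: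
  assumes "summable (\<lambda>r. \<bar>pp p r\<bar>)" and "\<And>x. \<bar>g x\<bar> \<le> B"
  shows "\<bar>integral\<^sup>L (nu P n p x0 R) g - (\<Sum>u<R. mu_weight n u * g (lam p u))\<bar> \<le> B / real (NN n R)"
proof -
  interpret compressed_laplacian P n x0 R p
    by unfold_locales (rule assms(1))
  have "\<bar>g m / real (NN n R)\<bar> \<le> B / real (NN n R)" for m
    using assms(2)[of m] NN_pos[of R] by (simp add: abs_div divide_right_mono)
  then show ?thesis
    using integral_nu by simp
qed

theorem proposition2:
  fixes P :: "nat \<Rightarrow> 'a :: countable set set" and n :: "nat \<Rightarrow> nat"
    and p :: "nat \<Rightarrow> real" and x0 :: 'a
  assumes "infinite (UNIV :: 'a set)"
    and "hierarchical P n"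
    and "\<And>r. r \<ge> 1 \<Longrightarrow> p r > 0"
    and "(\<lambda>r. p (Suc r)) sums 1"
  shows "weak_star_conv (nu P n p x0) (mu n p)"
  unfolding weak_star_conv_def
proof (intro allI impI)
  interpret hierarchy P n
    by unfold_locales (rule assms(2))
  fix g :: "real \<Rightarrow> real"
  assume "continuous_on UNIV g" and "bounded (range g)"
  then obtain B where B: "\<And>x. \<bar>g x\<bar> \<le> B" and g: "g \<in> borel_measurable borel"
    using borel_measurable_continuous_onI unfolding bounded_iff by auto
  define S where "S R = (\<Sum>u<R. mu_weight n u * g (lam p u))" for R
  have "S \<longlonglongrightarrow> integral\<^sup>L (mu n p) g"
    using integral_mu_sums[OF assms(1) g B] unfolding S_def sums_def .
  moreover have "(\<lambda>R. integral\<^sup>L (nu P n p x0 R) g - S R) \<longlonglongrightarrow> 0"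
  proof (rule Lim_null_comparison)
    show "\<forall>\<^sub>F R in sequentially. norm (integral\<^sup>L (nu P n p x0 R) g - S R) \<le> B * (1 / real (NN n R))"
      using integral_nu_approx[where g = g, OF summable_abs_pp[OF assms(3,4)] B]
      unfolding S_def by (intro always_eventually allI) simp
    show "(\<lambda>R. B * (1 / real (NN n R))) \<longlonglongrightarrow> 0"
      using tendsto_mult_right_zero[OF inverse_NN_tendsto_0[OF assms(1)]] .
  qed
  ultimately show "(\<lambda>R. integral\<^sup>L (nu P n p x0 R) g) \<longlonglongrightarrow> integral\<^sup>L (mu n p) g"
    by (rule Lim_transform)
qed

end
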